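(* Let $X$ be an uncountable set and let $\ell_\infty(X)$ be the space of all bounded functions $f:X\to\mathbb{R}$. Then there exists no reproducing kernel Hilbert space $H$ of functions on $X$ such that $\ell_\infty(X)\subset H$.
   Context: A reproducing kernel Hilbert space (RKHS) on a set $X$ is a Hilbert space $H$ consisting of real-valued functions $f:X\to\mathbb{R}$ (with the pointwise vector space operations) such that for every $x\in X$ the point evaluation $f\mapsto f(x)$ is a continuous linear functional on $H$; equivalently, $H$ has a reproducing kernel $k:X\times X\to\mathbb{R}$ with $k(\cdot,x)\in H$ and $f(x)=\langle f,k(\cdot,x)\rangle_H$ for all $f\in H$, $x\in X$. The inclusion $\ell_\infty(X)\subset H$ is meant as sets of functions on $X$. *)

theory Defs
  imports "HOL-Analysis.Analysis"
begin

text \<open>A Hilbert space of real-valued functions on the type 'x is represented by an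
abstract real Hilbert space (a type of class real_inner and complete_space) together
with an injective linear map into the functions 'x => real, whose image is the
underlying set of functions H; its vector operations are thus the pointwise ones.\<close>

definition is_rkhs :: "('h::{real_inner,complete_space} \<Rightarrow> ('x \<Rightarrow> real)) \<Rightarrow> bool" where
  "is_rkhs \<iota> \<longleftrightarrow>
     (\<forall>a b x. \<iota> (a + b) x = \<iota> a x + \<iota> b x) \<and>
     (\<forall>c a x. \<iota> (c *\<^sub>R a) x = c * \<iota> a x) \<and> inj \<iota> \<and> (\<forall>x. continuous_on UNIV (\<lambda>h. \<iota> h x))"

definition ell_infty :: "('x \<Rightarrow> real) set" where
  "ell_infty = {f. bounded (range f)}"

end

theory Submission
  imports Defs
begin

text \<open>By the Riesz representation theorem every point evaluation of an RKHS is given by a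
kernel vector \<open>k x\<close>, and since the type is uncountable, infinitely many of these are bounded in
norm by a common \<open>m\<close>. For \<open>n\<close> such points, choosing signs greedily gives
\<open>\<parallel>\<Sum>\<^sub>i \<epsilon>\<^sub>i k x\<^sub>i\<parallel>\<^sup>2 \<le> n m\<^sup>2\<close>. A bounded function \<open>f = \<iota> g\<close> that takes the values \<open>\<epsilon>\<^sub>i\<close> at the
points \<open>x\<^sub>i\<close> then satisfies \<open>n = \<langle>g, \<Sum>\<^sub>i \<epsilon>\<^sub>i k x\<^sub>i\<rangle> \<le> \<parallel>g\<parallel> m \<surd>n\<close>. Using disjoint blocks of
points for all \<open>n\<close> at once produces a single bounded \<open>f\<close> whose preimage would need \<open>\<parallel>g\<parallel>\<^sup>2 m\<^sup>2 \<ge> n\<close>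
for every \<open>n\<close>.\<close>

lemma Cauchy_if_dist_le_null_sum:
  fixes p :: "nat \<Rightarrow> 'a::metric_space"
  assumes "e \<longlonglongrightarrow> 0" and "\<And>j k. dist (p j) (p k) \<le> e j + e k"
  shows "Cauchy p"
proof (rule metric_CauchyI)
  fix r :: real
  assume "r > 0"
  then obtain M where "\<forall>n\<ge>M. \<bar>e n\<bar> < r / 2"
    using assms(1) unfolding lim_sequentially by (metis dist_real_def diff_zero half_gt_zero)
  then have "\<forall>j\<ge>M. \<forall>k\<ge>M. dist (p j) (p k) < r"
    using assms(2) by (smt (verit, best) field_sum_of_halves)
  then show "\<exists>M. \<forall>j\<ge>M. \<forall>k\<ge>M. dist (p j) (p k) < r" by blast
qed

lemma parallelogram_law:
  fixes a b :: "'a::real_inner"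
  shows "(norm (a - b))\<^sup>2 + (norm (a + b))\<^sup>2 = 2 * (norm a)\<^sup>2 + 2 * (norm b)\<^sup>2"
  by (simp add: power2_norm_eq_inner inner_add_left inner_add_right inner_diff_left
      inner_diff_right inner_commute algebra_simps)

lemma closest_point_exists_Hilbert:
  fixes S :: "'a::{real_inner,complete_space} set"
  assumes "closed S" and "convex S" and "S \<noteq> {}"
  obtains p where "p \<in> S" and "\<And>y. y \<in> S \<Longrightarrow> norm (a - p) \<le> norm (a - y)"
proof -
  define d where "d = Inf ((\<lambda>y. (norm (a - y))\<^sup>2) ` S)"
  define \<delta> where "\<delta> j = inverse (real (Suc j))" for j
  have d_le: "d \<le> (norm (a - y))\<^sup>2" if "y \<in> S" for y
    unfolding d_def using that by (auto intro!: cInf_lower bdd_belowI[of _ 0])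
  have "\<exists>y\<in>S. (norm (a - y))\<^sup>2 < d + (\<delta> j)\<^sup>2" for j
  proof -
    have "Inf ((\<lambda>y. (norm (a - y))\<^sup>2) ` S) < d + (\<delta> j)\<^sup>2"
      unfolding d_def \<delta>_def by simp
    then show ?thesis
      using \<open>S \<noteq> {}\<close> by (subst (asm) cInf_less_iff) (auto intro: bdd_belowI[of _ 0])
  qed
  then obtain q where q_in: "\<And>j. q j \<in> S" and q_near: "\<And>j. (norm (a - q j))\<^sup>2 < d + (\<delta> j)\<^sup>2"
    by metis
  have "dist (q j) (q k) \<le> 2 * \<delta> j + 2 * \<delta> k" for j k
  proof -
    have "(1/2) *\<^sub>R q j + (1/2) *\<^sub>R q k \<in> S"
      using \<open>convex S\<close> q_in by (intro convexD) auto
    moreover have "a - ((1/2) *\<^sub>R q j + (1/2) *\<^sub>R q k) = (1/2) *\<^sub>R ((a - q k) + (a - q j))"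
      by (simp add: algebra_simps flip: scaleR_2)
    ultimately have "4 * d \<le> (norm ((a - q k) + (a - q j)))\<^sup>2"
      using d_le by (fastforce simp: power2_eq_square)
    moreover have "(norm (q j - q k))\<^sup>2 + (norm ((a - q k) + (a - q j)))\<^sup>2
        = 2 * (norm (a - q k))\<^sup>2 + 2 * (norm (a - q j))\<^sup>2"
      using parallelogram_law[of "a - q k" "a - q j"] by simp
    ultimately have "(norm (q j - q k))\<^sup>2 \<le> 2 * (\<delta> j)\<^sup>2 + 2 * (\<delta> k)\<^sup>2"
      using q_near[of j] q_near[of k] by linarith
    also have "\<dots> \<le> (2 * \<delta> j + 2 * \<delta> k)\<^sup>2"
      by (simp add: \<delta>_def power2_eq_square algebra_simps)
    finally show ?thesis
      unfolding dist_norm by (rule power2_le_imp_le) (simp add: \<delta>_def)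
  qed
  moreover have "(\<lambda>j. 2 * \<delta> j) \<longlonglongrightarrow> 0"
    unfolding \<delta>_def using LIMSEQ_inverse_real_of_nat tendsto_mult_right_zero by blast
  ultimately have "Cauchy q"
    by (intro Cauchy_if_dist_le_null_sum[where e = "\<lambda>j. 2 * \<delta> j"]) simp
  then obtain p where q_lim: "q \<longlonglongrightarrow> p"
    using Cauchy_convergent convergent_def by blast
  have "p \<in> S"
    using \<open>closed S\<close> q_in q_lim closed_sequentially by blast
  have "(\<lambda>j. d + (\<delta> j)\<^sup>2) \<longlonglongrightarrow> d + 0\<^sup>2"
    unfolding \<delta>_def by (intro tendsto_intros LIMSEQ_inverse_real_of_nat)
  moreover have "(\<lambda>j. (norm (a - q j))\<^sup>2) \<longlonglongrightarrow> (norm (a - p))\<^sup>2"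
    by (intro tendsto_intros q_lim)
  ultimately have "(norm (a - p))\<^sup>2 \<le> d"
    using q_near by (intro LIMSEQ_le) (auto intro: less_imp_le)
  then have "norm (a - p) \<le> norm (a - y)" if "y \<in> S" for y
    using d_le[OF that] by (simp add: power2_le_imp_le)
  with \<open>p \<in> S\<close> show ?thesis using that by blast
qed

lemma closest_point_subspace_orthogonal:
  fixes S :: "'a::real_inner set"
  assumes "subspace S" and "p \<in> S" and closest: "\<And>y. y \<in> S \<Longrightarrow> norm (a - p) \<le> norm (a - y)"
    and "n \<in> S"
  shows "inner (a - p) n = 0"
proof (cases "n = 0")
  case False
  define c where "c = inner (a - p) n"
  define t where "t = c / inner n n"
  have n_pos: "inner n n > 0" using False by simp
  have "p + t *\<^sub>R n \<in> S"
    using assms by (simp add: subspace_add subspace_mul)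
  then have "(norm (a - p))\<^sup>2 \<le> (norm ((a - p) - t *\<^sub>R n))\<^sup>2"
    using closest by (simp add: algebra_simps)
  also have "\<dots> = (norm (a - p))\<^sup>2 - 2 * t * c + t * t * inner n n"
    by (simp add: c_def power2_norm_eq_inner inner_diff_left inner_diff_right inner_commute
        algebra_simps)
  also have "\<dots> = (norm (a - p))\<^sup>2 - c\<^sup>2 / inner n n"
    using n_pos by (simp add: t_def field_simps power2_eq_square)
  finally have "c\<^sup>2 \<le> 0"
    using n_pos by (simp add: divide_le_0_iff)
  then show ?thesis by (simp add: c_def)
qed simp

lemma Riesz_representation:
  fixes \<phi> :: "'a::{real_inner,complete_space} \<Rightarrow> real"
  assumes "linear \<phi>" and "continuous_on UNIV \<phi>"
  obtains k where "\<And>h. \<phi> h = inner h k"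
proof (cases "\<forall>h. \<phi> h = 0")
  case True
  then show ?thesis using that[of 0] by simp
next
  case False
  then obtain b where "\<phi> b \<noteq> 0" by blast
  define a where "a = (1 / \<phi> b) *\<^sub>R b"
  have "\<phi> a = 1"
    using \<open>\<phi> b \<noteq> 0\<close> by (simp add: a_def linear_scale[OF \<open>linear \<phi>\<close>])
  define N where "N = {h. \<phi> h = 0}"
  have "subspace N"
    unfolding N_def using \<open>linear \<phi>\<close> by (rule real_vector.linear_subspace_kernel)
  moreover have "closed N"
    unfolding N_def using assms(2) by (intro closed_Collect_eq) simp_all
  ultimately obtain p where "p \<in> N" and closest: "\<And>y. y \<in> N \<Longrightarrow> norm (a - p) \<le> norm (a - y)"
    using closest_point_exists_Hilbert subspace_imp_convex subspace_0 by blast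
  define z where "z = a - p"
  have "\<phi> z = 1"
    using \<open>\<phi> a = 1\<close> \<open>p \<in> N\<close> by (simp add: z_def N_def linear_diff[OF \<open>linear \<phi>\<close>])
  then have "inner z z > 0"
    using linear_0[OF \<open>linear \<phi>\<close>] by (cases "z = 0") auto
  have z_orth: "inner z y = 0" if "y \<in> N" for y
    unfolding z_def using \<open>subspace N\<close> \<open>p \<in> N\<close> closest that
    by (rule closest_point_subspace_orthogonal)
  have "\<phi> h = inner h ((1 / inner z z) *\<^sub>R z)" for h
  proof -
    have "h - \<phi> h *\<^sub>R z \<in> N"
      using \<open>\<phi> z = 1\<close> \<open>linear \<phi>\<close> by (simp add: N_def linear_diff linear_scale)
    then have "inner z (h - \<phi> h *\<^sub>R z) = 0"
      by (rule z_orth)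
    then show ?thesis
      using \<open>inner z z > 0\<close> by (simp add: inner_diff_right inner_commute)
  qed
  then show ?thesis by (rule that)
qed

lemma rkhs_reproducing_kernel:
  assumes "is_rkhs \<iota>"
  obtains k where "\<And>x h. \<iota> h x = inner h (k x)"
proof -
  have "\<exists>k. \<forall>h. \<iota> h x = inner h k" for x
  proof -
    have "linear (\<lambda>h. \<iota> h x)" and "continuous_on UNIV (\<lambda>h. \<iota> h x)"
      using assms by (auto intro: linearI simp: is_rkhs_def)
    then show ?thesis
      by (metis Riesz_representation)
  qed
  then show ?thesis
    using that by metis
qed

lemma exists_signs_norm_sum_le:
  fixes v :: "nat \<Rightarrow> 'a::real_inner"
  shows "\<exists>e. (\<forall>i. e i \<in> {-1, 1}) \<and> (norm (\<Sum>i<n. e i *\<^sub>R v i))\<^sup>2 \<le> (\<Sum>i<n. (norm (v i))\<^sup>2)"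
proof (induction n)
  case 0
  show ?case by (rule exI[of _ "\<lambda>_. 1"]) simp
next
  case (Suc n)
  then obtain e where e_signs: "\<forall>i. e i \<in> {-1, 1}"
    and e_bound: "(norm (\<Sum>i<n. e i *\<^sub>R v i))\<^sup>2 \<le> (\<Sum>i<n. (norm (v i))\<^sup>2)"
    by blast
  define s where "s = (\<Sum>i<n. e i *\<^sub>R v i)"
  \<comment> \<open>The new sign is chosen against the partial sum, so the cross term is nonpositive.\<close>
  define \<sigma> :: real where "\<sigma> = (if inner s (v n) \<le> 0 then 1 else -1)"
  define e' where "e' = e(n := \<sigma>)"
  have "(\<Sum>i<n. e' i *\<^sub>R v i) = s"
    unfolding s_def e'_def by (rule sum.cong) auto
  then have "(\<Sum>i<Suc n. e' i *\<^sub>R v i) = s + \<sigma> *\<^sub>R v n"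
    by (simp add: e'_def)
  moreover have "(norm (s + \<sigma> *\<^sub>R v n))\<^sup>2
      = (norm s)\<^sup>2 + 2 * (\<sigma> * inner s (v n)) + (\<sigma> * \<sigma>) * (norm (v n))\<^sup>2"
    by (simp add: power2_norm_eq_inner inner_add_left inner_add_right inner_commute
        algebra_simps)
  moreover have "\<sigma> * inner s (v n) \<le> 0" and "\<sigma> * \<sigma> = 1"
    by (auto simp: \<sigma>_def)
  ultimately have "(norm (\<Sum>i<Suc n. e' i *\<^sub>R v i))\<^sup>2 \<le> (\<Sum>i<Suc n. (norm (v i))\<^sup>2)"
    using e_bound by (simp add: s_def)
  moreover have "\<forall>i. e' i \<in> {-1, 1}"
    using e_signs by (simp add: e'_def \<sigma>_def)
  ultimately show ?case by blast
qed

lemma sign_pattern_forces_norm: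
  fixes v :: "nat \<Rightarrow> 'a::real_inner"
  assumes v_bound: "\<And>i. i < n \<Longrightarrow> norm (v i) \<le> m"
  obtains e where "\<forall>i. e i \<in> {-1, 1}"
    and "\<And>h. (\<forall>i<n. inner h (v i) = e i) \<Longrightarrow> real n \<le> (norm h * m)\<^sup>2"
proof -
  obtain e where e_signs: "\<forall>i. e i \<in> {-1, 1}"
    and e_bound: "(norm (\<Sum>i<n. e i *\<^sub>R v i))\<^sup>2 \<le> (\<Sum>i<n. (norm (v i))\<^sup>2)"
    using exists_signs_norm_sum_le by blast
  define w where "w = (\<Sum>i<n. e i *\<^sub>R v i)"
  have "real n \<le> (norm h * m)\<^sup>2" if interpolates: "\<forall>i<n. inner h (v i) = e i" for h
  proof (cases "n = 0")
    case False
    have "e i * e i = 1" for i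
      using e_signs[rule_format, of i] by auto
    then have "real n = (\<Sum>i<n. e i * e i)"
      by simp
    also have "\<dots> = inner h w"
      using interpolates by (simp add: w_def inner_sum_right)
    also have "\<dots> \<le> norm h * norm w"
      by (rule norm_cauchy_schwarz)
    finally have "(real n)\<^sup>2 \<le> (norm h)\<^sup>2 * (norm w)\<^sup>2"
      by (metis of_nat_0_le_iff power_mono power_mult_distrib)
    also have "\<dots> \<le> (norm h)\<^sup>2 * (real n * m\<^sup>2)"
    proof (rule mult_left_mono)
      have "(norm w)\<^sup>2 \<le> (\<Sum>i<n. (norm (v i))\<^sup>2)"
        using e_bound by (simp add: w_def)
      also have "\<dots> \<le> (\<Sum>i<n. m\<^sup>2)"
        using v_bound by (intro sum_mono power_mono) auto
      finally show "(norm w)\<^sup>2 \<le> real n * m\<^sup>2"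
        by simp
    qed simp
    finally show ?thesis
      using False by (simp add: power2_eq_square power_mult_distrib algebra_simps)
  qed simp
  with e_signs show ?thesis
    using that by blast
qed

lemma uncountable_obtain_injective_bounded:
  fixes g :: "'x \<Rightarrow> real"
  assumes "uncountable (UNIV :: 'x set)"
  obtains m and z :: "'b::countable \<Rightarrow> 'x" where "inj z" and "\<And>b. g (z b) \<le> m"
proof -
  have "\<exists>m::nat. infinite {x. g x \<le> real m}"
  proof (rule ccontr)
    assume "\<not> ?thesis"
    then have "countable (\<Union>m::nat. {x. g x \<le> real m})"
      by (intro countable_UN) (auto intro: countable_finite)
    moreover have "(\<Union>m::nat. {x. g x \<le> real m}) = UNIV"
      using real_arch_simple by blast
    ultimately show False
      using assms by simp
  qed
  then obtain m :: nat and y :: "nat \<Rightarrow> 'x" where "inj y" and "range y \<subseteq> {x. g x \<le> real m}"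
    using infinite_countable_subset by blast
  then have "inj (y \<circ> to_nat)" and "g ((y \<circ> to_nat) b) \<le> real m" for b :: 'b
    by (auto intro: inj_compose)
  then show ?thesis
    using that by blast
qed

lemma inj_obtain_bounded_extension:
  fixes s :: "'b \<Rightarrow> real"
  assumes "inj z" and "bounded (range s)"
  obtains f where "bounded (range f)" and "\<And>b. f (z b) = s b"
proof
  define f where "f x = (if x \<in> range z then s (inv z x) else 0)" for x
  have "range f \<subseteq> insert 0 (range s)"
    by (auto simp: f_def)
  then show "bounded (range f)"
    using assms(2) by (metis bounded_insert bounded_subset)
  show "f (z b) = s b" for b
    using assms(1) by (simp add: f_def)
qed

theorem theorem2:
  fixes \<iota> :: "'h::{real_inner,complete_space} \<Rightarrow> ('x \<Rightarrow> real)"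
  assumes "uncountable (UNIV :: 'x set)"
  shows "\<not> (is_rkhs \<iota> \<and> ell_infty \<subseteq> range \<iota>)"
proof
  assume "is_rkhs \<iota> \<and> ell_infty \<subseteq> range \<iota>"
  then obtain k where kernel: "\<And>x h. \<iota> h x = inner h (k x)" and "ell_infty \<subseteq> range \<iota>"
    using rkhs_reproducing_kernel by blast
  obtain m and z :: "nat \<times> nat \<Rightarrow> 'x" where "inj z" and k_bound: "\<And>p. norm (k (z p)) \<le> m"
    using uncountable_obtain_injective_bounded[OF assms, of "\<lambda>x. norm (k x)"] by blast
  \<comment> \<open>The points \<open>z (n, i)\<close>, \<open>i < n\<close>, form the \<open>n\<close>-th block; blocks are disjoint since \<open>z\<close> is injective.\<close>
  have "\<exists>e. (\<forall>i. e i \<in> {-1, 1}) \<and>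
      (\<forall>h. (\<forall>i<n. inner h (k (z (n, i))) = e i) \<longrightarrow> real n \<le> (norm h * m)\<^sup>2)" for n
    using sign_pattern_forces_norm[of n "\<lambda>i. k (z (n, i))" m] k_bound by metis
  then obtain \<epsilon> where signs: "\<And>n i. \<epsilon> n i \<in> {-1, 1}"
    and forces: "\<And>n h. (\<forall>i<n. inner h (k (z (n, i))) = \<epsilon> n i) \<Longrightarrow> real n \<le> (norm h * m)\<^sup>2"
    by metis
  have "bounded (range (case_prod \<epsilon>))"
    by (rule bounded_subset[OF finite_imp_bounded, of "{-1, 1}"]) (use signs in auto)
  with \<open>inj z\<close> obtain f where "bounded (range f)" and f_z: "\<And>p. f (z p) = case_prod \<epsilon> p"
    by (rule inj_obtain_bounded_extension) blast
  then obtain g where "f = \<iota> g"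
    using \<open>ell_infty \<subseteq> range \<iota>\<close> unfolding ell_infty_def by blast
  have "real n \<le> (norm g * m)\<^sup>2" for n
    by (intro forces) (simp add: f_z flip: kernel \<open>f = \<iota> g\<close>)
  then show False
    using reals_Archimedean2 not_le by blast
qed

end
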